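(* Assume the standing hypothesis (H) below, and assume that $\nabla_wG(x,w)\in W'$ exists for all $(x,w)\in X\times W$ and that $\nabla_wG:X\times W\to W'$ is continuous. Let $u\in W^{1,1}(0,T;X)$, $w\in W^{1,1}(0,T;W)$, $x_0\in Z(w(0))$, let $\xi$ be the solution of the sweeping process with inputs $(u,w)$ and initial condition $x_0$, and $x=u-\xi$. Then $$\langle\dot\xi(t),\dot x(t)+s(t)\rangle=0\quad\text{for a.e. }t\in(0,T),$$ where $$s(t)=\frac{\nabla_xG(x(t),w(t))}{\mathrm{dist}(x(t),\partial Z(w(t)))+|\nabla_xG(x(t),w(t))|^2}\,\langle\dot w(t),\nabla_wG(x(t),w(t))\rangle_W.$$
   Context: $T>0$. $X$ is a real Hilbert space with inner product $\langle\cdot,\cdot\rangle$ and norm $|x|=\sqrt{\langle x,x\rangle}$; $W$ is a real Banach space with norm $|\cdot|_W$, dual $W'$ and duality pairing $\langle v,f\rangle_W$ ($v\in W$, $f\in W'$). $G:X\times W\to[0,\infty)$ is locally Lipschitz continuous and $Z(w):=\{x\in X: G(x,w)\le 1\}$; $\partial Z(w)$ is its boundary, $\mathrm{dist}(x,S)=\inf_{s\in S}|x-s|$. Partial gradients: $\nabla_xG(x,w)\in X$ with $\langle\nabla_xG(x,w),y\rangle=\lim_{t\to0}\frac1t(G(x+ty,w)-G(x,w))$ for all $y$; $\nabla_wG(x,w)\in W'$ with $\langle v,\nabla_wG(x,w)\rangle_W=\lim_{t\to0}\frac1t(G(x,w+tv)-G(x,w))$ for all $v$. (H): $\nabla_xG(x,w)$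 exists for all $(x,w)$; there are positive constants $\lambda,c,L$ and functions $\mu_1:W\times[0,\infty)\to[0,\infty)$, $\mu_2:[0,\infty)\to[0,\infty)$ with $\mu_1(w,0)=\mu_2(0)=0$, $\lim_{s\to\infty}\mu_1(w,s)=\lim_{s\to\infty}\mu_2(s)=\infty$ for every $w$, such that for all $x,y,z\in X$, $w,w'\in W$: (i) $G(x,w)=1\Rightarrow|\nabla_xG(x,w)|\ge c$; (ii) $|\nabla_xG(x,w)-\nabla_xG(y,w)|\le\mu_1(w,|x-y|)$ if $x,y\in Z(w)$; (iii) $\langle\nabla_xG(x,w)-\nabla_xG(z,w),x-z\rangle\ge-\lambda|x-z|^2$ if $x\in\partial Z(w)$, $z\in Z(w)$; (iv) $|G(x,w)-G(x,w')|\le L|w-w'|_W$; (v) for $\rho>0$, $\mathrm{dist}(x,Z(w))\ge\rho\Rightarrow G(x,w)-1\ge\mu_2(\rho)$. Set $r:=c/\lambda$. Sweeping process with inputs $(u,w)$ and initial condition $x_0\in Z(w(0))$: $\xi\in W^{1,1}(0,T;X)$ such that, with $x:=u-\xi$, $x(t)\in Z(w(t))$ for all $t\in[0,T]$, $\langle x(t)-z,\dot\xi(t)\rangle+\frac{|\dot\xi(t)|}{2r}|x(t)-z|^2\ge0$ for all $z\in Z(w(t))$ and a.e. $t$, and $x(0)=x_0$. Under (H) this solution exists and is unique. *)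

theory Defs
  imports "HOL-Analysis.Analysis"
begin

definition Zset :: "('x \<Rightarrow> 'w \<Rightarrow> real) \<Rightarrow> 'w \<Rightarrow> 'x set" where
  "Zset G w = {x. G x w \<le> 1}"

definition loc_lipschitz2 :: "('x::metric_space \<Rightarrow> 'w::metric_space \<Rightarrow> real) \<Rightarrow> bool" where
  "loc_lipschitz2 G \<longleftrightarrow>
     (\<forall>p. \<exists>e>0. \<exists>K. K-lipschitz_on (ball p e) (\<lambda>q. G (fst q) (snd q)))"

definition abs_cont_on :: "real \<Rightarrow> (real \<Rightarrow> 'a::metric_space) \<Rightarrow> bool" where
  "abs_cont_on T f \<longleftrightarrow>
     (\<forall>\<epsilon>>0. \<exists>\<delta>>0. \<forall>(I::nat set) a b. finite I \<longrightarrow>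
        (\<forall>i\<in>I. 0 \<le> a i \<and> a i \<le> b i \<and> b i \<le> T) \<longrightarrow>
        (\<forall>i\<in>I. \<forall>j\<in>I. i \<noteq> j \<longrightarrow> b i \<le> a j \<or> b j \<le> a i) \<longrightarrow>
        (\<Sum>i\<in>I. b i - a i) < \<delta> \<longrightarrow>
        (\<Sum>i\<in>I. dist (f (b i)) (f (a i))) < \<epsilon>)"

text \<open>W^{1,1}(0,T;V) for a Banach space V: by the Bochner/Komura characterisation,
  exactly the functions that are absolutely continuous on [0,T] and differentiable
  almost everywhere (then f(t) = f(0) + Bochner integral of f' over [0,t], f' in L^1).\<close>
definition W11 :: "real \<Rightarrow> (real \<Rightarrow> 'a::real_normed_vector) \<Rightarrow> bool" where
  "W11 T f \<longleftrightarrow> abs_cont_on T f \<and>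
     (AE t in lborel. t \<in> {0<..<T} \<longrightarrow> f differentiable (at t))"

definition sweeping_sol ::
  "('x::{real_inner,complete_space} \<Rightarrow> 'w::banach \<Rightarrow> real) \<Rightarrow> real \<Rightarrow> real \<Rightarrow>
   (real \<Rightarrow> 'x) \<Rightarrow> (real \<Rightarrow> 'w) \<Rightarrow> 'x \<Rightarrow> (real \<Rightarrow> 'x) \<Rightarrow> bool" where
  "sweeping_sol G r T u w x0 \<xi> \<longleftrightarrow>
     W11 T \<xi> \<and>
     (\<forall>t\<in>{0..T}. u t - \<xi> t \<in> Zset G (w t)) \<and>
     (AE t in lborel. t \<in> {0<..<T} \<longrightarrow>
        (\<forall>z\<in>Zset G (w t).
           inner (u t - \<xi> t - z) (vector_derivative \<xi> (at t))
           + norm (vector_derivative \<xi> (at t)) / (2 * r) * (norm (u t - \<xi> t - z))\<^sup>2 \<ge> 0)) \<and>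
     u 0 - \<xi> 0 = x0"

text \<open>dist(x, S) with the convention inf of the empty set = +\<infinity>; we only use it
  through 1/(dist + a), which is 0 when S is empty.\<close>
definition s_fun ::
  "('x::{real_inner,complete_space} \<Rightarrow> 'w::banach \<Rightarrow> real) \<Rightarrow> ('x \<Rightarrow> 'w \<Rightarrow> 'x) \<Rightarrow>
   ('x \<Rightarrow> 'w \<Rightarrow> ('w \<Rightarrow>\<^sub>L real)) \<Rightarrow> (real \<Rightarrow> 'x) \<Rightarrow> (real \<Rightarrow> 'w) \<Rightarrow> real \<Rightarrow> 'x" where
  "s_fun G Gx Gw x w t =
     (if frontier (Zset G (w t)) = {} then 0
      else (blinfun_apply (Gw (x t) (w t)) (vector_derivative w (at t))
              / (infdist (x t) (frontier (Zset G (w t))) + (norm (Gx (x t) (w t)))\<^sup>2))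
           *\<^sub>R Gx (x t) (w t))"

end

theory Submission
  imports Defs
begin

text \<open>
  At almost every time \<open>t\<close> the sweeping inequality says that \<open>\<xi>'(t)\<close> is a proximal normal
  to \<open>Z(w(t))\<close> at \<open>x(t)\<close>. If \<open>G(x(t),w(t)) < 1\<close>, every direction is feasible and
  \<open>\<xi>'(t) = 0\<close>. Otherwise \<open>G(x(t),w(t)) = 1\<close> and \<open>n = \<nabla>\<^sub>xG \<noteq> 0\<close> by (H)(i); every \<open>v\<close>
  with \<open>\<langle>n,v\<rangle> < 0\<close> points into \<open>Z\<close>, so \<open>\<xi>'(t)\<close> is a multiple of \<open>n\<close>. Moreover \<open>t\<close> is an
  interior maximum of \<open>\<tau> \<mapsto> G(x(\<tau>),w(\<tau>)) \<le> 1\<close>, whose derivative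
  \<open>\<langle>n,x'\<rangle> + \<langle>w',\<nabla>\<^sub>wG\<rangle>\<close> therefore vanishes; the chain rule holds because \<open>G\<close> is locally
  Lipschitz with directional derivatives in \<open>x\<close> and continuously Gateaux differentiable
  in \<open>w\<close>. Finally \<open>x(t) \<in> \<partial>Z\<close>, so \<open>s(t) = \<langle>w',\<nabla>\<^sub>wG\<rangle> n / |n|\<^sup>2\<close> and
  \<open>\<langle>\<xi>', x' + s\<rangle>\<close> is a multiple of that vanishing derivative.
  Of the hypotheses (H) only (i) is used, and the value of \<open>r\<close> plays no role.
\<close>

lemma has_vector_derivative_difference_quotient:
  fixes f :: "real \<Rightarrow> 'a::real_normed_vector"
  assumes "(f has_vector_derivative f') (at t)"
  shows "((\<lambda>h. (f (t + h) - f t) /\<^sub>R h) \<longlongrightarrow> f') (at 0)"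
proof -
  have "((\<lambda>h. norm (f (t + h) - f t - h *\<^sub>R f') / norm h) \<longlongrightarrow> 0) (at 0)"
    using assms unfolding has_vector_derivative_def has_derivative_at by auto
  moreover have "\<forall>\<^sub>F h in at 0. norm (f (t + h) - f t - h *\<^sub>R f') / norm h = norm ((f (t + h) - f t) /\<^sub>R h - f')"
    using eventually_neq_at_within[of 0 0 UNIV]
  proof eventually_elim
    case (elim h)
    then have "(f (t + h) - f t) /\<^sub>R h - f' = inverse h *\<^sub>R (f (t + h) - f t - h *\<^sub>R f')"
      by (simp add: algebra_simps)
    then show ?case
      by (simp add: divide_inverse mult.commute abs_inverse)
  qed
  ultimately have "((\<lambda>h. norm ((f (t + h) - f t) /\<^sub>R h - f')) \<longlongrightarrow> 0) (at 0)"
    by (rule Lim_transform_eventually)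
  then show ?thesis
    by (simp add: tendsto_norm_zero_iff LIM_zero_iff)
qed

lemma gateaux_mean_value_bound:
  fixes g :: "'a::real_normed_vector \<Rightarrow> real" and Dg :: "'a \<Rightarrow> 'a \<Rightarrow>\<^sub>L real"
  assumes gateaux: "\<And>\<sigma>. ((\<lambda>s. (g (w + \<sigma> *\<^sub>R k + s *\<^sub>R k) - g (w + \<sigma> *\<^sub>R k)) / s)
                        \<longlongrightarrow> Dg (w + \<sigma> *\<^sub>R k) k) (at 0)"
    and close: "\<And>\<sigma>. 0 \<le> \<sigma> \<Longrightarrow> \<sigma> \<le> 1 \<Longrightarrow> norm (Dg (w + \<sigma> *\<^sub>R k) - B) \<le> \<epsilon>"
  shows "\<bar>g (w + k) - g w - B k\<bar> \<le> \<epsilon> * norm k"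
proof -
  define f where "f \<sigma> = g (w + \<sigma> *\<^sub>R k) - \<sigma> * B k" for \<sigma>
  have deriv: "(f has_real_derivative Dg (w + \<sigma> *\<^sub>R k) k - B k) (at \<sigma>)" for \<sigma>
  proof -
    have "((\<lambda>s. (g (w + \<sigma> *\<^sub>R k + s *\<^sub>R k) - g (w + \<sigma> *\<^sub>R k)) / s - B k)
            \<longlongrightarrow> Dg (w + \<sigma> *\<^sub>R k) k - B k) (at 0)"
      using gateaux by (intro tendsto_diff) auto
    moreover have "\<forall>\<^sub>F s in at 0. (g (w + \<sigma> *\<^sub>R k + s *\<^sub>R k) - g (w + \<sigma> *\<^sub>R k)) / s - B k
                                  = (f (\<sigma> + s) - f \<sigma>) / s"
      using eventually_neq_at_within[of 0 0 UNIV]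
    proof eventually_elim
      case (elim s)
      have "f (\<sigma> + s) - f \<sigma> = (g (w + \<sigma> *\<^sub>R k + s *\<^sub>R k) - g (w + \<sigma> *\<^sub>R k)) - s * B k"
        unfolding f_def by (simp add: scaleR_add_left add.assoc ring_distribs)
      then show ?case
        using elim by (simp add: diff_divide_distrib)
    qed
    ultimately show ?thesis
      unfolding DERIV_def by (rule Lim_transform_eventually)
  qed
  obtain \<sigma> where \<sigma>: "0 < \<sigma>" "\<sigma> < 1" and mvt: "f 1 - f 0 = Dg (w + \<sigma> *\<^sub>R k) k - B k"
    using MVT2[of 0 1 f, OF _ deriv] by auto
  have "\<bar>Dg (w + \<sigma> *\<^sub>R k) k - B k\<bar> = norm ((Dg (w + \<sigma> *\<^sub>R k) - B) k)"
    by (simp add: blinfun.diff_left)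
  also have "\<dots> \<le> norm (Dg (w + \<sigma> *\<^sub>R k) - B) * norm k"
    by (rule norm_blinfun)
  also have "\<dots> \<le> \<epsilon> * norm k"
    using close \<sigma> by (intro mult_right_mono) auto
  finally show ?thesis
    using mvt by (simp add: f_def)
qed

lemma gateaux_uniform_linearization:
  fixes G :: "'x::metric_space \<Rightarrow> 'w::real_normed_vector \<Rightarrow> real"
    and Gw :: "'x \<Rightarrow> 'w \<Rightarrow> ('w \<Rightarrow>\<^sub>L real)"
  assumes gateaux: "\<And>x w v. ((\<lambda>s. (G x (w + s *\<^sub>R v) - G x w) / s) \<longlongrightarrow> Gw x w v) (at 0)"
    and cont: "isCont (\<lambda>p. Gw (fst p) (snd p)) (y0, w0)"
    and "\<epsilon> > 0"
  obtains d where "d > 0"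
    and "\<And>y k. dist y y0 < d \<Longrightarrow> norm k < d \<Longrightarrow>
           \<bar>G y (w0 + k) - G y w0 - Gw y0 w0 k\<bar> \<le> \<epsilon> * norm k"
proof -
  obtain d where "d > 0" and d: "\<And>p. dist p (y0, w0) < d \<Longrightarrow> dist (Gw (fst p) (snd p)) (Gw y0 w0) < \<epsilon>"
    using cont \<open>\<epsilon> > 0\<close> unfolding continuous_at_eps_delta by (metis fst_conv snd_conv)
  have "\<bar>G y (w0 + k) - G y w0 - Gw y0 w0 k\<bar> \<le> \<epsilon> * norm k"
    if y: "dist y y0 < d / 2" and k: "norm k < d / 2" for y k
  proof (rule gateaux_mean_value_bound[where Dg = "Gw y"])
    show "((\<lambda>s. (G y (w0 + \<sigma> *\<^sub>R k + s *\<^sub>R k) - G y (w0 + \<sigma> *\<^sub>R k)) / s)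
            \<longlongrightarrow> Gw y (w0 + \<sigma> *\<^sub>R k) k) (at 0)" for \<sigma>
      by (rule gateaux)
    show "norm (Gw y (w0 + \<sigma> *\<^sub>R k) - Gw y0 w0) \<le> \<epsilon>" if "0 \<le> \<sigma>" "\<sigma> \<le> 1" for \<sigma>
    proof -
      have "\<sigma> * norm k \<le> norm k"
        using that by (simp add: mult_left_le_one_le)
      have "dist (y, w0 + \<sigma> *\<^sub>R k) (y0, w0) \<le> \<bar>dist y y0\<bar> + \<bar>dist (w0 + \<sigma> *\<^sub>R k) w0\<bar>"
        unfolding dist_Pair_Pair by (rule sqrt_sum_squares_le_sum_abs)
      also have "\<dots> = dist y y0 + \<sigma> * norm k"
        using that by (simp add: dist_norm)
      also have "\<dots> < d"
        using y k \<open>\<sigma> * norm k \<le> norm k\<close> by simp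
      finally show ?thesis
        using d by (fastforce simp: dist_norm)
    qed
  qed
  then show ?thesis
    using \<open>d > 0\<close> by (intro that[of "d / 2"]) auto
qed

lemma gateaux_remainder_quotient_tendsto_zero:
  fixes G :: "'x::metric_space \<Rightarrow> 'w::real_normed_vector \<Rightarrow> real"
    and Gw :: "'x \<Rightarrow> 'w \<Rightarrow> ('w \<Rightarrow>\<^sub>L real)"
  assumes gateaux: "\<And>x w v. ((\<lambda>s. (G x (w + s *\<^sub>R v) - G x w) / s) \<longlongrightarrow> Gw x w v) (at 0)"
    and cont: "isCont (\<lambda>p. Gw (fst p) (snd p)) (y0, w0)"
    and y: "(y \<longlongrightarrow> y0) (at 0)"
    and k: "(k \<longlongrightarrow> 0) (at 0)"
    and kq: "((\<lambda>h. k h /\<^sub>R h) \<longlongrightarrow> w') (at 0)"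
  shows "((\<lambda>h. (G (y h) (w0 + k h) - G (y h) w0 - Gw y0 w0 (k h)) / h) \<longlongrightarrow> 0) (at 0)"
  unfolding tendsto_iff
proof (intro allI impI)
  fix \<epsilon> :: real
  assume "\<epsilon> > 0"
  define M where "M = norm w' + 1"
  have "M > 0"
    unfolding M_def by (simp add: add_nonneg_pos)
  obtain d where "d > 0" and lin: "\<And>z k. dist z y0 < d \<Longrightarrow> norm k < d \<Longrightarrow>
      \<bar>G z (w0 + k) - G z w0 - Gw y0 w0 k\<bar> \<le> \<epsilon> / M * norm k"
    using gateaux_uniform_linearization[OF gateaux cont, of "\<epsilon> / M"] \<open>\<epsilon> > 0\<close> \<open>M > 0\<close> by auto
  have "\<forall>\<^sub>F h in at 0. dist (y h) y0 < d"
    using y \<open>d > 0\<close> unfolding tendsto_iff by blast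
  moreover have "\<forall>\<^sub>F h in at 0. norm (k h) < d"
    using k \<open>d > 0\<close> unfolding tendsto_iff by simp
  moreover have "\<forall>\<^sub>F h in at 0. dist (k h /\<^sub>R h) w' < 1"
    using kq unfolding tendsto_iff by simp
  ultimately show "\<forall>\<^sub>F h in at 0. dist ((G (y h) (w0 + k h) - G (y h) w0 - Gw y0 w0 (k h)) / h) 0 < \<epsilon>"
  proof eventually_elim
    case (elim h)
    have "norm (k h /\<^sub>R h) < M"
      using elim(3) norm_triangle_ineq2[of "k h /\<^sub>R h" w'] unfolding M_def by (simp add: dist_norm)
    have "\<bar>(G (y h) (w0 + k h) - G (y h) w0 - Gw y0 w0 (k h)) / h\<bar>
        = \<bar>G (y h) (w0 + k h) - G (y h) w0 - Gw y0 w0 (k h)\<bar> / \<bar>h\<bar>"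
      by simp
    also have "\<dots> \<le> \<epsilon> / M * norm (k h) / \<bar>h\<bar>"
      using lin[OF elim(1,2)] by (rule divide_right_mono) simp
    also have "\<dots> = \<epsilon> / M * norm (k h /\<^sub>R h)"
      by (simp add: divide_inverse mult.assoc)
    also have "\<dots> < \<epsilon> / M * M"
      using \<open>norm (k h /\<^sub>R h) < M\<close> \<open>\<epsilon> > 0\<close> \<open>M > 0\<close> by (intro mult_strict_left_mono) simp_all
    finally show ?case
      using \<open>M > 0\<close> by simp
  qed
qed

lemma difference_quotient_second_arg_tendsto:
  fixes G :: "'x::metric_space \<Rightarrow> 'w::real_normed_vector \<Rightarrow> real"
    and Gw :: "'x \<Rightarrow> 'w \<Rightarrow> ('w \<Rightarrow>\<^sub>L real)"
  assumes gateaux: "\<And>x w v. ((\<lambda>s. (G x (w + s *\<^sub>R v) - G x w) / s) \<longlongrightarrow> Gw x w v) (at 0)"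
    and cont: "isCont (\<lambda>p. Gw (fst p) (snd p)) (y0, w t)"
    and y: "(y \<longlongrightarrow> y0) (at 0)"
    and w: "(w has_vector_derivative w') (at t)"
  shows "((\<lambda>h. (G (y h) (w (t + h)) - G (y h) (w t)) / h) \<longlongrightarrow> Gw y0 (w t) w') (at 0)"
proof -
  define k where "k h = w (t + h) - w t" for h
  have kq: "((\<lambda>h. k h /\<^sub>R h) \<longlongrightarrow> w') (at 0)"
    unfolding k_def using w by (rule has_vector_derivative_difference_quotient)
  have "((\<lambda>h. w (t + h)) \<longlongrightarrow> w t) (at 0)"
    using has_vector_derivative_continuous[OF w] by (simp add: isCont_iff)
  then have "(k \<longlongrightarrow> 0) (at 0)"
    unfolding k_def by (simp add: LIM_zero)
  with gateaux cont y have "((\<lambda>h. (G (y h) (w t + k h) - G (y h) (w t) - Gw y0 (w t) (k h)) / h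
      + Gw y0 (w t) (k h /\<^sub>R h)) \<longlongrightarrow> 0 + Gw y0 (w t) w') (at 0)"
    using kq by (intro tendsto_add tendsto_intros gateaux_remainder_quotient_tendsto_zero)
  moreover have "Gw y0 (w t) (k h /\<^sub>R h) = Gw y0 (w t) (k h) / h" for h
    by (simp add: blinfun.scaleR_right divide_inverse mult.commute)
  ultimately show ?thesis
    by (simp add: k_def add_divide_distrib[symmetric])
qed

lemma loc_lipschitz2_first_arg:
  assumes "loc_lipschitz2 G"
  obtains e K where "e > 0" and "K-lipschitz_on (ball x e) (\<lambda>y. G y w)"
proof -
  obtain e K where "e > 0" and lip: "K-lipschitz_on (ball (x, w) e) (\<lambda>q. G (fst q) (snd q))"
    using assms unfolding loc_lipschitz2_def by blast
  have "K-lipschitz_on (ball x e) (\<lambda>y. G y w)"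
  proof (rule lipschitz_onI)
    fix y z
    assume "y \<in> ball x e" "z \<in> ball x e"
    then have "(y, w) \<in> ball (x, w) e" "(z, w) \<in> ball (x, w) e"
      by (simp_all add: dist_Pair_Pair)
    from lipschitz_onD[OF lip this] show "dist (G y w) (G z w) \<le> K * dist y z"
      by (simp add: dist_Pair_Pair)
  next
    show "0 \<le> K"
      using lip by (rule lipschitz_on_nonneg)
  qed
  with \<open>e > 0\<close> show ?thesis
    by (rule that)
qed

lemma lipschitz_directional_chain_rule:
  fixes g :: "'a::real_normed_vector \<Rightarrow> real"
  assumes lip: "K-lipschitz_on (ball (x t) e) g" and "e > 0"
    and dir: "((\<lambda>s. g (x t + s *\<^sub>R x')) has_real_derivative l) (at 0)"
    and x: "(x has_vector_derivative x') (at t)"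
  shows "((\<lambda>\<tau>. g (x \<tau>)) has_real_derivative l) (at t)"
proof -
  have xq: "((\<lambda>h. (x (t + h) - x t) /\<^sub>R h) \<longlongrightarrow> x') (at 0)"
    using x by (rule has_vector_derivative_difference_quotient)
  have "((\<lambda>h. x (t + h)) \<longlongrightarrow> x t) (at 0)"
    using has_vector_derivative_continuous[OF x] by (simp add: isCont_iff)
  then have near_curve: "\<forall>\<^sub>F h in at 0. x (t + h) \<in> ball (x t) e"
    using \<open>e > 0\<close> unfolding tendsto_iff by (simp add: dist_commute)
  have "((\<lambda>h. x t + h *\<^sub>R x') \<longlongrightarrow> x t + 0 *\<^sub>R x') (at 0)"
    by (intro tendsto_intros)
  then have near_line: "\<forall>\<^sub>F h in at 0. x t + h *\<^sub>R x' \<in> ball (x t) e"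
    using \<open>e > 0\<close> unfolding tendsto_iff by (simp add: dist_commute)
  have "((\<lambda>h. (g (x (t + h)) - g (x t + h *\<^sub>R x')) / h) \<longlongrightarrow> 0) (at 0)"
  proof (rule Lim_null_comparison)
    show "\<forall>\<^sub>F h in at 0. norm ((g (x (t + h)) - g (x t + h *\<^sub>R x')) / h)
                          \<le> K * norm ((x (t + h) - x t) /\<^sub>R h - x')"
      using near_curve near_line eventually_neq_at_within[of 0 0 UNIV]
    proof eventually_elim
      case (elim h)
      have "x (t + h) - (x t + h *\<^sub>R x') = h *\<^sub>R ((x (t + h) - x t) /\<^sub>R h - x')"
        using elim(3) by (simp add: algebra_simps)
      then have "\<bar>g (x (t + h)) - g (x t + h *\<^sub>R x')\<bar> \<le> K * (\<bar>h\<bar> * norm ((x (t + h) - x t) /\<^sub>R h - x'))"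
        using lipschitz_onD[OF lip elim(1,2)] by (simp add: dist_norm)
      then show ?case
        using elim(3) by (simp add: abs_divide divide_le_eq mult.commute mult.left_commute)
    qed
    have "((\<lambda>h. K * norm ((x (t + h) - x t) /\<^sub>R h - x')) \<longlongrightarrow> K * norm (x' - x')) (at 0)"
      using xq by (intro tendsto_intros)
    then show "((\<lambda>h. K * norm ((x (t + h) - x t) /\<^sub>R h - x')) \<longlongrightarrow> 0) (at 0)"
      by simp
  qed
  moreover have "((\<lambda>h. (g (x t + h *\<^sub>R x') - g (x t)) / h) \<longlongrightarrow> l) (at 0)"
    using dir by (simp add: DERIV_def)
  ultimately have "((\<lambda>h. (g (x (t + h)) - g (x t + h *\<^sub>R x')) / h + (g (x t + h *\<^sub>R x') - g (x t)) / h)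
                    \<longlongrightarrow> 0 + l) (at 0)"
    by (rule tendsto_add)
  then show ?thesis
    by (simp add: DERIV_def add_divide_distrib[symmetric])
qed

lemma chain_rule_along_curve:
  fixes G :: "'x::real_normed_vector \<Rightarrow> 'w::real_normed_vector \<Rightarrow> real"
    and Gw :: "'x \<Rightarrow> 'w \<Rightarrow> ('w \<Rightarrow>\<^sub>L real)"
  assumes "loc_lipschitz2 G"
    and dir_x: "((\<lambda>s. G (x t + s *\<^sub>R x') (w t)) has_real_derivative l) (at 0)"
    and gateaux_w: "\<And>x w v. ((\<lambda>s. (G x (w + s *\<^sub>R v) - G x w) / s) \<longlongrightarrow> Gw x w v) (at 0)"
    and cont: "isCont (\<lambda>p. Gw (fst p) (snd p)) (x t, w t)"
    and x: "(x has_vector_derivative x') (at t)"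
    and w: "(w has_vector_derivative w') (at t)"
  shows "((\<lambda>\<tau>. G (x \<tau>) (w \<tau>)) has_real_derivative l + Gw (x t) (w t) w') (at t)"
proof -
  obtain e K where "e > 0" and lip: "K-lipschitz_on (ball (x t) e) (\<lambda>y. G y (w t))"
    using loc_lipschitz2_first_arg[OF \<open>loc_lipschitz2 G\<close>] by blast
  have "((\<lambda>\<tau>. G (x \<tau>) (w t)) has_real_derivative l) (at t)"
    by (rule lipschitz_directional_chain_rule[OF lip \<open>e > 0\<close> dir_x x])
  then have dx: "((\<lambda>h. (G (x (t + h)) (w t) - G (x t) (w t)) / h) \<longlongrightarrow> l) (at 0)"
    by (simp add: DERIV_def)
  have "((\<lambda>h. x (t + h)) \<longlongrightarrow> x t) (at 0)"
    using has_vector_derivative_continuous[OF x] by (simp add: isCont_iff)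
  with gateaux_w cont have dw:
    "((\<lambda>h. (G (x (t + h)) (w (t + h)) - G (x (t + h)) (w t)) / h) \<longlongrightarrow> Gw (x t) (w t) w') (at 0)"
    using w by (rule difference_quotient_second_arg_tendsto)
  from tendsto_add[OF dx dw] show ?thesis
    by (simp add: DERIV_def add_divide_distrib[symmetric])
qed

lemma derivative_along_feasible_curve_zero_at_level:
  fixes G :: "'x::real_normed_vector \<Rightarrow> 'w::real_normed_vector \<Rightarrow> real"
    and Gw :: "'x \<Rightarrow> 'w \<Rightarrow> ('w \<Rightarrow>\<^sub>L real)"
  assumes "loc_lipschitz2 G"
    and dir_x: "((\<lambda>s. G (x t + s *\<^sub>R x') (w t)) has_real_derivative l) (at 0)"
    and gateaux_w: "\<And>x w v. ((\<lambda>s. (G x (w + s *\<^sub>R v) - G x w) / s) \<longlongrightarrow> Gw x w v) (at 0)"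
    and cont: "isCont (\<lambda>p. Gw (fst p) (snd p)) (x t, w t)"
    and feasible: "\<And>\<tau>. \<tau> \<in> {0..T} \<Longrightarrow> x \<tau> \<in> Zset G (w \<tau>)"
    and t: "t \<in> {0<..<T}"
    and x: "(x has_vector_derivative x') (at t)"
    and w: "(w has_vector_derivative w') (at t)"
    and level: "G (x t) (w t) = 1"
  shows "l + Gw (x t) (w t) w' = 0"
proof -
  have "((\<lambda>\<tau>. G (x \<tau>) (w \<tau>)) has_real_derivative l + Gw (x t) (w t) w') (at t)"
    using \<open>loc_lipschitz2 G\<close> dir_x gateaux_w cont x w by (rule chain_rule_along_curve)
  moreover have "\<forall>\<tau>. \<bar>t - \<tau>\<bar> < min t (T - t) \<longrightarrow> G (x \<tau>) (w \<tau>) \<le> G (x t) (w t)"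
    using feasible level by (auto simp: Zset_def abs_less_iff)
  ultimately show ?thesis
    using t by (intro DERIV_local_max[where d = "min t (T - t)"]) auto
qed

definition prox_normal :: "'a::real_inner set \<Rightarrow> real \<Rightarrow> 'a \<Rightarrow> 'a \<Rightarrow> bool" where
  "prox_normal S C x p \<longleftrightarrow> (\<forall>z\<in>S. inner (x - z) p + C * (norm (x - z))\<^sup>2 \<ge> 0)"

lemma sweeping_sol_prox_normal:
  assumes "sweeping_sol G r T u w x0 \<xi>"
  shows "AE t in lborel. t \<in> {0<..<T} \<longrightarrow>
    prox_normal (Zset G (w t)) (norm (vector_derivative \<xi> (at t)) / (2 * r)) (u t - \<xi> t)
      (vector_derivative \<xi> (at t))"
  using assms unfolding sweeping_sol_def prox_normal_def by auto

lemma prox_normal_feasible_direction: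
  assumes normal: "prox_normal S C x p"
    and feasible: "\<forall>\<^sub>F s in at_right 0. x + s *\<^sub>R v \<in> S"
  shows "inner v p \<le> 0"
proof -
  have "\<forall>\<^sub>F s in at_right 0. inner v p \<le> C * s * (norm v)\<^sup>2"
    using feasible eventually_at_right_less[of 0]
  proof eventually_elim
    case (elim s)
    with normal have "0 \<le> inner (x - (x + s *\<^sub>R v)) p + C * (norm (x - (x + s *\<^sub>R v)))\<^sup>2"
      unfolding prox_normal_def by blast
    then have "s * inner v p \<le> s * (C * s * (norm v)\<^sup>2)"
      using elim by (simp add: power2_eq_square algebra_simps)
    then show ?case
      using elim by simp
  qed
  moreover have "((\<lambda>s. C * s * (norm v)\<^sup>2) \<longlongrightarrow> 0) (at_right 0)"
    by (auto intro!: tendsto_eq_intros)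
  ultimately show ?thesis
    by (intro tendsto_lowerbound[of "\<lambda>s. C * s * (norm v)\<^sup>2"]) auto
qed

lemma parallel_if_inner_nonpos_on_halfspace:
  fixes n p :: "'a::real_inner"
  assumes "n \<noteq> 0" and halfspace: "\<And>v. inner n v < 0 \<Longrightarrow> inner v p \<le> 0"
  shows "p = (inner n p / inner n n) *\<^sub>R n"
proof -
  define q where "q = p - (inner n p / inner n n) *\<^sub>R n"
  have "inner n q = 0"
    using \<open>n \<noteq> 0\<close> by (simp add: q_def inner_diff_right)
  then have "inner q p = inner q q"
    by (simp add: q_def inner_diff_right inner_commute)
  have "inner q q \<le> 0 + e" if "e > 0" for e
  proof -
    define \<delta> where "\<delta> = e / (\<bar>inner n p\<bar> + 1)"
    have "\<delta> > 0"
      using \<open>e > 0\<close> by (simp add: \<delta>_def add_nonneg_pos)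
    have "\<delta> * inner n p \<le> \<delta> * (\<bar>inner n p\<bar> + 1)"
      using \<open>\<delta> > 0\<close> by (intro mult_left_mono) auto
    also have "\<dots> = e"
      by (simp add: \<delta>_def add_nonneg_pos)
    finally have "\<delta> * inner n p \<le> e" .
    have "inner n (q - \<delta> *\<^sub>R n) < 0"
      using \<open>inner n q = 0\<close> \<open>\<delta> > 0\<close> \<open>n \<noteq> 0\<close> by (simp add: inner_diff_right)
    then have "inner (q - \<delta> *\<^sub>R n) p \<le> 0"
      by (rule halfspace)
    then show ?thesis
      using \<open>inner q p = inner q q\<close> \<open>\<delta> * inner n p \<le> e\<close> by (simp add: inner_diff_left)
  qed
  then have "inner q q = 0"
    using field_le_epsilon[of "inner q q" 0] inner_ge_zero[of q] by simp
  then have "q = 0"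
    by simp
  then show ?thesis
    by (simp add: q_def)
qed

lemma eventually_in_Zset_if_sublevel:
  fixes G :: "'a::real_normed_vector \<Rightarrow> 'w \<Rightarrow> real"
  assumes "((\<lambda>s. G (x + s *\<^sub>R v) w) has_real_derivative l) (at 0)" and "G x w < 1"
  shows "\<forall>\<^sub>F s in at_right 0. x + s *\<^sub>R v \<in> Zset G w"
proof -
  have "((\<lambda>s. G (x + s *\<^sub>R v) w) \<longlongrightarrow> G x w) (at 0)"
    using DERIV_isCont[OF assms(1)] by (simp add: isCont_def)
  then have "((\<lambda>s. G (x + s *\<^sub>R v) w) \<longlongrightarrow> G x w) (at_right 0)"
    by (simp add: filterlim_at_split)
  from order_tendstoD(2)[OF this \<open>G x w < 1\<close>] show ?thesis
    by (auto simp: Zset_def elim: eventually_mono)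
qed

lemma eventually_in_Zset_if_descent:
  fixes G :: "'a::real_normed_vector \<Rightarrow> 'w \<Rightarrow> real"
  assumes "((\<lambda>s. G (x + s *\<^sub>R v) w) has_real_derivative l) (at 0)" and "l < 0" and "G x w \<le> 1"
  shows "\<forall>\<^sub>F s in at_right 0. x + s *\<^sub>R v \<in> Zset G w"
proof -
  obtain d where "d > 0" and dec: "\<And>h. 0 < h \<Longrightarrow> h < d \<Longrightarrow> G (x + h *\<^sub>R v) w < G x w"
    using DERIV_neg_dec_right[OF assms(1,2)] by auto
  show ?thesis
    unfolding eventually_at_right_field
  proof (intro exI conjI allI impI)
    show "d > 0" by fact
    show "x + h *\<^sub>R v \<in> Zset G w" if "0 < h" "h < d" for h
      using dec[OF that] \<open>G x w \<le> 1\<close> by (simp add: Zset_def)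
  qed
qed

lemma level_point_in_frontier_Zset:
  fixes G :: "'a::real_normed_vector \<Rightarrow> 'w \<Rightarrow> real"
  assumes "((\<lambda>s. G (x + s *\<^sub>R v) w) has_real_derivative l) (at 0)" and "l > 0" and "G x w = 1"
  shows "x \<in> frontier (Zset G w)"
proof -
  obtain d where "d > 0" and inc: "\<And>h. 0 < h \<Longrightarrow> h < d \<Longrightarrow> G x w < G (x + h *\<^sub>R v) w"
    using DERIV_pos_inc_right[OF assms(1,2)] by auto
  have "\<forall>\<^sub>F s in at_right 0. x + s *\<^sub>R v \<in> closure (- Zset G w)"
    unfolding eventually_at_right_field
  proof (intro exI conjI allI impI)
    show "d > 0" by fact
    show "x + h *\<^sub>R v \<in> closure (- Zset G w)" if "0 < h" "h < d" for h
      using inc[OF that] \<open>G x w = 1\<close> closure_subset by (fastforce simp: Zset_def)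
  qed
  moreover have "((\<lambda>s. x + s *\<^sub>R v) \<longlongrightarrow> x) (at_right 0)"
    by (auto intro!: tendsto_eq_intros)
  ultimately have "x \<in> closure (- Zset G w)"
    by (intro Lim_in_closed_set) auto
  moreover have "x \<in> closure (Zset G w)"
    using \<open>G x w = 1\<close> closure_subset by (fastforce simp: Zset_def)
  ultimately show ?thesis
    by (simp add: frontier_def closure_complement)
qed

lemma s_fun_at_frontier:
  assumes "x t \<in> frontier (Zset G (w t))"
  shows "s_fun G Gx Gw x w t =
    (Gw (x t) (w t) (vector_derivative w (at t)) / (norm (Gx (x t) (w t)))\<^sup>2) *\<^sub>R Gx (x t) (w t)"
  using assms by (auto simp: s_fun_def)

lemma prox_normal_Zset_sublevel:
  fixes G :: "'a::real_inner \<Rightarrow> 'w \<Rightarrow> real"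
  assumes Gx_deriv: "\<And>v. ((\<lambda>s. G (x + s *\<^sub>R v) w) has_real_derivative inner (Gx x w) v) (at 0)"
    and "G x w < 1" and normal: "prox_normal (Zset G w) C x p"
  shows "p = 0"
proof -
  have "inner p p \<le> 0"
    using normal eventually_in_Zset_if_sublevel[where G = G, OF Gx_deriv[of p] \<open>G x w < 1\<close>]
    by (rule prox_normal_feasible_direction)
  then show ?thesis
    using inner_ge_zero[of p] by simp
qed

lemma prox_normal_Zset_level:
  fixes G :: "'a::real_inner \<Rightarrow> 'w \<Rightarrow> real"
  assumes Gx_deriv: "\<And>v. ((\<lambda>s. G (x + s *\<^sub>R v) w) has_real_derivative inner (Gx x w) v) (at 0)"
    and "G x w = 1" and "Gx x w \<noteq> 0" and normal: "prox_normal (Zset G w) C x p"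
  shows "p = (inner (Gx x w) p / inner (Gx x w) (Gx x w)) *\<^sub>R Gx x w"
proof (rule parallel_if_inner_nonpos_on_halfspace[OF \<open>Gx x w \<noteq> 0\<close>])
  fix v
  assume "inner (Gx x w) v < 0"
  with Gx_deriv \<open>G x w = 1\<close> have "\<forall>\<^sub>F s in at_right 0. x + s *\<^sub>R v \<in> Zset G w"
    by (intro eventually_in_Zset_if_descent) auto
  with normal show "inner v p \<le> 0"
    by (rule prox_normal_feasible_direction)
qed

lemma sweeping_velocity_orthogonal:
  fixes G :: "'x::{real_inner,complete_space} \<Rightarrow> 'w::banach \<Rightarrow> real"
    and Gw :: "'x \<Rightarrow> 'w \<Rightarrow> ('w \<Rightarrow>\<^sub>L real)"
  assumes "loc_lipschitz2 G"
    and Gx_deriv: "\<And>x w v. ((\<lambda>s. G (x + s *\<^sub>R v) w) has_real_derivative inner (Gx x w) v) (at 0)"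
    and Gw_grad: "\<And>x w v. ((\<lambda>s. (G x (w + s *\<^sub>R v) - G x w) / s) \<longlongrightarrow> Gw x w v) (at 0)"
    and Gw_cont: "isCont (\<lambda>p. Gw (fst p) (snd p)) (x t, w t)"
    and grad_nonzero: "G (x t) (w t) = 1 \<Longrightarrow> Gx (x t) (w t) \<noteq> 0"
    and feasible: "\<And>\<tau>. \<tau> \<in> {0..T} \<Longrightarrow> x \<tau> \<in> Zset G (w \<tau>)"
    and t: "t \<in> {0<..<T}"
    and x: "(x has_vector_derivative x') (at t)"
    and w: "w differentiable (at t)"
    and normal: "prox_normal (Zset G (w t)) C (x t) p"
  shows "inner p (x' + s_fun G Gx Gw x w t) = 0"
proof (cases "G (x t) (w t) < 1")
  case True
  then show ?thesis
    using prox_normal_Zset_sublevel[where G = G and Gx = Gx, OF Gx_deriv True normal] by simp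
next
  case False
  moreover have "G (x t) (w t) \<le> 1"
    using feasible[of t] t by (simp add: Zset_def)
  ultimately have level: "G (x t) (w t) = 1"
    by simp
  define n where "n = Gx (x t) (w t)"
  define w' where "w' = vector_derivative w (at t)"
  have "n \<noteq> 0"
    using grad_nonzero level by (simp add: n_def)
  have p: "p = (inner n p / inner n n) *\<^sub>R n"
    unfolding n_def using Gx_deriv level grad_nonzero[OF level] normal by (rule prox_normal_Zset_level)
  have stationary: "inner n x' + Gw (x t) (w t) w' = 0"
    unfolding n_def w'_def
    using \<open>loc_lipschitz2 G\<close> Gx_deriv Gw_grad Gw_cont feasible t x w[unfolded vector_derivative_works] level
    by (rule derivative_along_feasible_curve_zero_at_level)
  have "x t \<in> frontier (Zset G (w t))"
    using Gx_deriv[where x = "x t" and w = "w t" and v = n] _ level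
    by (rule level_point_in_frontier_Zset) (use \<open>n \<noteq> 0\<close> in \<open>simp flip: n_def\<close>)
  then have "s_fun G Gx Gw x w t = (Gw (x t) (w t) w' / inner n n) *\<^sub>R n"
    by (simp add: s_fun_at_frontier n_def w'_def power2_norm_eq_inner)
  then have "inner p (x' + s_fun G Gx Gw x w t)
      = inner n p / inner n n * (inner n x' + Gw (x t) (w t) w')"
    using \<open>n \<noteq> 0\<close> by (subst (1) p) (simp add: inner_add_right algebra_simps)
  with stationary show ?thesis
    by simp
qed

theorem lemma2p4:
  fixes G :: "'x::{real_inner,complete_space} \<Rightarrow> 'w::banach \<Rightarrow> real"
    and Gx :: "'x \<Rightarrow> 'w \<Rightarrow> 'x"
    and Gw :: "'x \<Rightarrow> 'w \<Rightarrow> ('w \<Rightarrow>\<^sub>L real)"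
    and lam c L T :: real
    and \<mu>1 :: "'w \<Rightarrow> real \<Rightarrow> real" and \<mu>2 :: "real \<Rightarrow> real"
    and u \<xi> :: "real \<Rightarrow> 'x" and w :: "real \<Rightarrow> 'w" and x0 :: 'x
  assumes T_pos: "T > 0"
    and G_nonneg: "\<And>x w. G x w \<ge> 0"
    and G_loclip: "loc_lipschitz2 G"
    and Gx_grad: "\<And>x w y. ((\<lambda>t. (G (x + t *\<^sub>R y) w - G x w) / t) \<longlongrightarrow> inner (Gx x w) y) (at 0)"
    and Gw_grad: "\<And>x w v. ((\<lambda>t. (G x (w + t *\<^sub>R v) - G x w) / t) \<longlongrightarrow> blinfun_apply (Gw x w) v) (at 0)"
    and Gw_cont: "continuous_on UNIV (\<lambda>p. Gw (fst p) (snd p))"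
    and pos: "lam > 0" "c > 0" "L > 0"
    and mu1: "\<And>w. \<mu>1 w 0 = 0" "\<And>w s. s \<ge> 0 \<Longrightarrow> \<mu>1 w s \<ge> 0" "\<And>w. filterlim (\<mu>1 w) at_top at_top"
    and mu2: "\<mu>2 0 = 0" "\<And>s. s \<ge> 0 \<Longrightarrow> \<mu>2 s \<ge> 0" "filterlim \<mu>2 at_top at_top"
    and H1: "\<And>x w. G x w = 1 \<Longrightarrow> norm (Gx x w) \<ge> c"
    and H2: "\<And>x y w. x \<in> Zset G w \<Longrightarrow> y \<in> Zset G w \<Longrightarrow> norm (Gx x w - Gx y w) \<le> \<mu>1 w (norm (x - y))"
    and H3: "\<And>x z w. x \<in> frontier (Zset G w) \<Longrightarrow> z \<in> Zset G w \<Longrightarrow>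
               inner (Gx x w - Gx z w) (x - z) \<ge> - lam * (norm (x - z))\<^sup>2"
    and H4: "\<And>x w w'. \<bar>G x w - G x w'\<bar> \<le> L * norm (w - w')"
    and H5: "\<And>x w \<rho>. \<rho> > 0 \<Longrightarrow> (\<forall>z\<in>Zset G w. dist x z \<ge> \<rho>) \<Longrightarrow> G x w - 1 \<ge> \<mu>2 \<rho>"
    and u_W11: "W11 T u" and w_W11: "W11 T w"
    and x0_in: "x0 \<in> Zset G (w 0)"
    and sol: "sweeping_sol G (c / lam) T u w x0 \<xi>"
  shows "AE t in lborel. t \<in> {0<..<T} \<longrightarrow>
           inner (vector_derivative \<xi> (at t))
                 (vector_derivative (\<lambda>\<tau>. u \<tau> - \<xi> \<tau>) (at t) + s_fun G Gx Gw (\<lambda>\<tau>. u \<tau> - \<xi> \<tau>) w t) = 0"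
proof -
  let ?x = "\<lambda>\<tau>. u \<tau> - \<xi> \<tau>"
  have Gx_deriv: "((\<lambda>s. G (x + s *\<^sub>R v) w) has_real_derivative inner (Gx x w) v) (at 0)" for x w v
    using Gx_grad by (simp add: DERIV_def)
  have Gw_isCont: "isCont (\<lambda>p. Gw (fst p) (snd p)) q" for q
    using Gw_cont by (simp add: continuous_on_eq_continuous_at del: split_paired_All)
  have grad_nonzero: "Gx x w \<noteq> 0" if "G x w = 1" for x w
    using H1[OF that] \<open>c > 0\<close> by auto
  have feasible: "\<And>\<tau>. \<tau> \<in> {0..T} \<Longrightarrow> ?x \<tau> \<in> Zset G (w \<tau>)" and "W11 T \<xi>"
    using sol unfolding sweeping_sol_def by auto
  have "AE t in lborel. t \<in> {0<..<T} \<longrightarrow> u differentiable (at t)"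
    and "AE t in lborel. t \<in> {0<..<T} \<longrightarrow> \<xi> differentiable (at t)"
    and "AE t in lborel. t \<in> {0<..<T} \<longrightarrow> w differentiable (at t)"
    using u_W11 \<open>W11 T \<xi>\<close> w_W11 unfolding W11_def by auto
  with sweeping_sol_prox_normal[OF sol] show ?thesis
  proof eventually_elim
    case (elim t)
    show ?case
    proof
      assume t: "t \<in> {0<..<T}"
      define p where "p = vector_derivative \<xi> (at t)"
      have x: "(?x has_vector_derivative vector_derivative u (at t) - p) (at t)"
        using elim t unfolding p_def by (intro has_vector_derivative_diff) (auto simp: vector_derivative_works)
      have "inner p (vector_derivative u (at t) - p + s_fun G Gx Gw ?x w t) = 0"
        using G_loclip Gx_deriv Gw_grad Gw_isCont grad_nonzero feasible t x
        by (rule sweeping_velocity_orthogonal) (use elim t in \<open>simp_all add: p_def\<close>)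
      then show "inner (vector_derivative \<xi> (at t)) (vector_derivative ?x (at t) + s_fun G Gx Gw ?x w t) = 0"
        by (simp add: vector_derivative_at[OF x] p_def)
    qed
  qed
qed

end
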